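(* Let $k\ge2$ and $n\le0$ with $\mathcal{F}_{n,k}\not\equiv0$, and write $q=q_{n,k}$, $r=r_{n,k}$. Write $\mathcal{F}_{n,k}(x)=x^rP_{n,k}(x^k)$ with $P_{n,k}(\xi)\in\mathbb{Z}[\xi]$ of degree $N=N_{n,k}$, where $N=q-1$ if $r=0$ and $N=q-r$ if $1\le r\le k-1$. Let $\xi_1,\dots,\xi_N$ be its roots counted with multiplicity, and $\sigma_h$ their $h$-th elementary symmetric polynomial. Then, for $h=1,\dots,N$, $$\sigma_h=\begin{cases}(-1)^hC_k\bigl(-(h+1),\,|n|+1-k(h+1)\bigr),& r=0,\\[4pt] (-1)^{h+r}\,C_k\bigl(-(h+r),\,|n|+1-k(h+r)\bigr)\Big/\binom{q-1}{r-1},& 1\le r\le k-1.\end{cases}$$ Moreover, if $N\ge1$, $$\sum_{j=1}^N\xi_j=\begin{cases}-(2q-3),& r=0,\ k=2,\\ -(q-1),& r=0,\ k\ge3,\\ -\dfrac{(r+1)(q-r)}{r},& 1\le r\le k-1,\end{cases}\qquad \prod_{j=1}^N\xi_j=\begin{cases}(-1)^N,& r=0,\\ (-1)^N\dfrac{q}{r},& 1\le r\le k-1.\end{cases}$$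
   Context: For $k\ge2$, the polynomials $\mathcal{F}_{n,k}(x)\in\mathbb{Z}[x]$ ($n\in\mathbb{Z}$) are defined by $\mathcal{F}_{1,k}=1$, $\mathcal{F}_{n,k}=0$ for $n=0,-1,\dots,-(k-2)$, and $\mathcal{F}_{n,k}(x)=\sum_{j=1}^{k}x^{k-j}\mathcal{F}_{n-j,k}(x)$ for all $n\in\mathbb{Z}$. This recurrence is used upwards for $n\ge2$, and downwards for $n\le-(k-1)$ as $\mathcal{F}_{n,k}=\mathcal{F}_{n+k,k}-\sum_{j=1}^{k-1}x^j\mathcal{F}_{n+j,k}$. For $n\le0$: $q_{n,k}=\lfloor(|n|+1)/k\rfloor$, and $r_{n,k}\in\{0,\dots,k-1\}$ is the residue of $|n|+1$ modulo $k$, so $|n|+1=kq_{n,k}+r_{n,k}$. For integers $m<0$ and $j\ge0$, $C_k(m,j)$ is the coefficient of $x^j$ in the formal power series $1/(1+x+\dots+x^{k-1})^{|m|}$. *)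

theory Defs
  imports "HOL-Computational_Algebra.Computational_Algebra"
begin

text \<open>Downward part: Fneg k m = F_{1-m,k} for m :: nat.
  Fneg k 0 = F_1 = 1, Fneg k m = F_{1-m} = 0 for 1 \<le> m \<le> k-1,
  and for m \<ge> k: F_{1-m} = F_{1-m+k} - sum_{j=1}^{k-1} x^j F_{1-m+j}.\<close>
function Fneg :: "nat \<Rightarrow> nat \<Rightarrow> int poly" where
  "Fneg k m = (if k < 2 then 0 else if m = 0 then 1 else if m < k then 0
     else Fneg k (m - k) - (\<Sum>j\<in>{1..k-1}. monom 1 j * Fneg k (m - j)))"
  by auto
termination
  by (relation "measure (\<lambda>(k, m). m)") auto

text \<open>Upward part: Fup k m = F_{m-(k-2),k}. Values 0 for m \<le> k-2, 1 for m = k-1,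
  and F_n = sum_{j=1}^k x^{k-j} F_{n-j} otherwise.\<close>
function Fup :: "nat \<Rightarrow> nat \<Rightarrow> int poly" where
  "Fup k m = (if k < 2 then 0 else if m < k - 1 then 0 else if m = k - 1 then 1
     else (\<Sum>j\<in>{1..k}. monom 1 (k - j) * Fup k (m - j)))"
  by auto
termination
  by (relation "measure (\<lambda>(k, m). m)") auto

definition Fpoly :: "nat \<Rightarrow> int \<Rightarrow> int poly" where
  "Fpoly k n = (if n \<ge> 2 - int k then Fup k (nat (n + int k - 2)) else Fneg k (nat (1 - n)))"

definition qnk :: "int \<Rightarrow> nat \<Rightarrow> nat" where
  "qnk n k = nat (\<bar>n\<bar> + 1) div k"

definition rnk :: "int \<Rightarrow> nat \<Rightarrow> nat" where
  "rnk n k = nat (\<bar>n\<bar> + 1) mod k"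

definition Ck :: "nat \<Rightarrow> int \<Rightarrow> int \<Rightarrow> rat" where
  "Ck k m j = (if j < 0 then 0 else
     fps_nth (inverse ((\<Sum>i<k. (fps_X :: rat fps) ^ i) ^ nat \<bar>m\<bar>)) (nat j))"

definition esym :: "nat \<Rightarrow> complex list \<Rightarrow> complex" where
  "esym h xs = (\<Sum>S | S \<subseteq> {..<length xs} \<and> card S = h. \<Prod>i\<in>S. xs ! i)"

end

(*
  For n <= 0 write m = |n| + 1 = k q + r and S = 1 + x + ... + x^(k-1). Since
  S * S^(-(p+1)) = S^(-p), the numbers C_k(-(m-e)/k, e) obey the downward recurrence that
  defines F_{n,k}; hence the coefficient of x^e in F_{n,k} is C_k(-(m-e)/k, e) if k divides
  m - e and 0 otherwise, and F_{n,k} = x^r P(x^k) with coefficients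
  P_i = C_k(-(q-i), r + k i). Expanding S^(-p) = (1 - x)^p / (1 - x^k)^p gives the closed
  form C_k(-p, k j + s) = (-1)^s binom(p, s) binom(j + p - 1, j) for s < k and p < s + k.
  It determines the degree, the leading, subleading and constant coefficients of P, and
  Vieta's formulas turn P_(N-h) / P_N into sigma_h.
*)
theory Submission
  imports Defs
begin

declare Fneg.simps[simp del] Fup.simps[simp del]

section \<open>The coefficients C_k\<close>

definition geom_sum_fps :: "nat \<Rightarrow> 'a::comm_ring_1 fps" where
  "geom_sum_fps k = (\<Sum>i<k. fps_X ^ i)"

definition Ck_nat :: "nat \<Rightarrow> nat \<Rightarrow> nat \<Rightarrow> rat" where
  "Ck_nat k p e = inverse (geom_sum_fps k ^ p :: rat fps) $ e"

lemma Ck_eq_Ck_nat: "Ck k (- int p) (int e) = Ck_nat k p e"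
  by (simp add: Ck_def Ck_nat_def geom_sum_fps_def)

lemma Ck_eq_Ck_nat_diff:
  assumes "k * p \<le> m"
  shows "Ck k (- int p) (int m - int k * int p) = Ck_nat k p (m - k * p)"
proof -
  have "int m - int k * int p = int (m - k * p)"
    using assms by (simp add: of_nat_diff)
  then show ?thesis
    by (simp only: Ck_eq_Ck_nat)
qed

lemma geom_sum_fps_nth: "geom_sum_fps k $ n = (if n < k then 1 else 0)"
  by (simp add: geom_sum_fps_def fps_sum_nth fps_X_power_nth)

lemma geom_sum_fps_times_one_minus_X: "geom_sum_fps k * (1 - fps_X) = 1 - fps_X ^ k"
  by (simp add: geom_sum_fps_def one_diff_power_eq mult.commute)

lemma Ck_nat_0: "Ck_nat k 0 e = (if e = 0 then 1 else 0)"
  by (simp add: Ck_nat_def)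

lemma Ck_nat_rec:
  assumes "k \<ge> 1"
  shows "Ck_nat k p e = (\<Sum>i<k. if i \<le> e then Ck_nat k (Suc p) (e - i) else 0)"
proof -
  have "(geom_sum_fps k ^ Suc p :: rat fps) $ 0 \<noteq> 0"
    using assms by (simp add: fps_nth_power_0 geom_sum_fps_nth)
  then have "geom_sum_fps k ^ p * (geom_sum_fps k * inverse (geom_sum_fps k ^ Suc p)) = (1 :: rat fps)"
    by (metis inverse_mult_eq_1' mult.assoc power_Suc2)
  then have "inverse (geom_sum_fps k ^ p) =
      geom_sum_fps k * (inverse (geom_sum_fps k ^ Suc p) :: rat fps)"
    by (rule fps_inverse_unique)
  then have "Ck_nat k p e = (\<Sum>i=0..e. geom_sum_fps k $ i * Ck_nat k (Suc p) (e - i))"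
    by (simp add: Ck_nat_def fps_mult_nth)
  also have "\<dots> = (\<Sum>i<k. if i \<le> e then Ck_nat k (Suc p) (e - i) else 0)"
    by (rule sum.mono_neutral_cong) (auto simp: geom_sum_fps_nth)
  finally show ?thesis .
qed

definition inv_one_minus_X_pow_fps :: "nat \<Rightarrow> nat \<Rightarrow> 'a::comm_ring_1 fps" where
  "inv_one_minus_X_pow_fps k p =
     Abs_fps (\<lambda>n. if k dvd n then of_nat ((n div k + p - 1) choose (n div k)) else 0)"

lemma inv_one_minus_X_pow_fps_Suc:
  assumes "k \<ge> 1"
  shows "inv_one_minus_X_pow_fps k (Suc p) * (1 - fps_X ^ k) = inv_one_minus_X_pow_fps k p"
proof (rule fps_ext)
  fix n
  have "(inv_one_minus_X_pow_fps k (Suc p) * (1 - fps_X ^ k)) $ n =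
      inv_one_minus_X_pow_fps k (Suc p) $ n -
      (if n < k then 0 else inv_one_minus_X_pow_fps k (Suc p) $ (n - k))"
    by (simp add: algebra_simps fps_X_power_mult_nth)
  also have "\<dots> = inv_one_minus_X_pow_fps k p $ n"
  proof (cases "k dvd n")
    case True
    then obtain j where "n = k * j" by blast
    with assms show ?thesis
      by (cases j) (auto simp: inv_one_minus_X_pow_fps_def algebra_simps)
  next
    case False
    then have "\<not> k dvd (n - k)" if "k \<le> n"
      using that by (metis dvd_add_triv_right_iff le_add_diff_inverse2)
    with False show ?thesis by (auto simp: inv_one_minus_X_pow_fps_def)
  qed
  finally show "(inv_one_minus_X_pow_fps k (Suc p) * (1 - fps_X ^ k)) $ n =
      inv_one_minus_X_pow_fps k p $ n" .
qed

lemma inv_one_minus_X_pow_fps_mult: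
  assumes "k \<ge> 1"
  shows "inv_one_minus_X_pow_fps k p * (1 - fps_X ^ k) ^ p = 1"
proof (induction p)
  case 0
  show ?case
    by (rule fps_ext)
      (use assms in \<open>auto simp: inv_one_minus_X_pow_fps_def binomial_eq_0 elim!: dvdE\<close>)
next
  case (Suc p)
  then show ?case
    using inv_one_minus_X_pow_fps_Suc[OF assms, of p] by (metis mult.assoc power_Suc)
qed

lemma one_minus_X_power_nth:
  "((1 - fps_X) ^ p :: 'a::comm_ring_1 fps) $ i = (-1) ^ i * of_nat (p choose i)"
proof (induction p arbitrary: i)
  case (Suc p)
  have "((1 - fps_X) ^ Suc p :: 'a fps) = (1 - fps_X) ^ p - fps_X * (1 - fps_X) ^ p"
    by (simp add: algebra_simps)
  then show ?case
    by (cases i) (simp_all add: Suc.IH fps_X_mult_nth algebra_simps)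
qed (auto simp: fps_one_nth binomial_eq_0)

lemma inverse_geom_sum_fps_power:
  assumes "k \<ge> 1"
  shows "inverse (geom_sum_fps k ^ p :: 'a::field fps) = (1 - fps_X) ^ p * inv_one_minus_X_pow_fps k p"
proof (rule fps_inverse_unique)
  have "geom_sum_fps k ^ p * ((1 - fps_X) ^ p * inv_one_minus_X_pow_fps k p) =
      inv_one_minus_X_pow_fps k p * (geom_sum_fps k * (1 - fps_X)) ^ p"
    by (simp add: power_mult_distrib mult_ac)
  then show "geom_sum_fps k ^ p * ((1 - fps_X) ^ p * inv_one_minus_X_pow_fps k p) = (1 :: 'a fps)"
    by (simp add: geom_sum_fps_times_one_minus_X inv_one_minus_X_pow_fps_mult[OF assms])
qed

lemma Ck_nat_eq_sum:
  assumes "k \<ge> 1"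
  shows "Ck_nat k p e = (\<Sum>i=0..e. (-1) ^ i * of_nat (p choose i) *
     (if k dvd (e - i) then of_nat (((e - i) div k + p - 1) choose ((e - i) div k)) else 0))"
  by (simp add: Ck_nat_def inverse_geom_sum_fps_power[OF assms] fps_mult_nth one_minus_X_power_nth
      inv_one_minus_X_pow_fps_def)

lemma Ck_nat_closed_form:
  assumes k: "k \<ge> 1" and s: "s < k" and p: "p < s + k \<or> j = 0"
  shows "Ck_nat k p (k * j + s) =
    (if s \<le> p then (-1) ^ s * of_nat (p choose s) * of_nat ((j + p - 1) choose j) else 0)"
proof -
  have other_indices_exceed_p: "p < i"
    if i: "i \<le> k * j + s" "k dvd (k * j + s - i)" "i \<noteq> s" for i
  proof (rule ccontr)
    assume "\<not> p < i"
    then have "i < s + k"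
      using i p k by auto
    have "(k * j + s) mod k = i mod k"
      using mod_eq_dvd_iff_nat[OF i(1)] i(2) by blast
    then have "i mod k = s"
      using s by simp
    with \<open>i < s + k\<close> have "i div k * k < k"
      using div_mult_mod_eq[of i k] by linarith
    then have "i div k = 0"
      by simp
    then show False
      using \<open>i mod k = s\<close> i(3) div_mult_mod_eq[of i k] by simp
  qed
  have "Ck_nat k p (k * j + s) = (\<Sum>i=0..k * j + s. (-1) ^ i * of_nat (p choose i) *
     (if k dvd (k * j + s - i)
      then of_nat (((k * j + s - i) div k + p - 1) choose ((k * j + s - i) div k)) else 0))"
    by (rule Ck_nat_eq_sum[OF k])
  also have "\<dots> = (\<Sum>i=0..k * j + s.
      if i = s then (-1) ^ s * of_nat (p choose s) * of_nat ((j + p - 1) choose j) else 0)"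
    using k by (intro sum.cong refl) (auto dest: other_indices_exceed_p)
  also have "\<dots> = (if s \<le> p then (-1) ^ s * of_nat (p choose s) * of_nat ((j + p - 1) choose j) else 0)"
    by (simp add: binomial_eq_0)
  finally show ?thesis .
qed

(* Ck_nat_closed_form misses p = k = 2; this is why k = 2 is special for the sum of the roots. *)
lemma Ck_nat_2_2: "Ck_nat 2 2 (2 * j) = 2 * of_nat j + 1"
proof (cases j)
  case 0
  then show ?thesis
    using Ck_nat_closed_form[of 2 0 2 0] by simp
next
  case (Suc j')
  have "Ck_nat 2 2 (2 * j) = (\<Sum>i=0..2 * j. (-1) ^ i * of_nat (2 choose i) *
     (if 2 dvd (2 * j - i) then of_nat (((2 * j - i) div 2 + 2 - 1) choose ((2 * j - i) div 2)) else 0))"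
    by (rule Ck_nat_eq_sum) simp
  also have "\<dots> = (\<Sum>i\<in>{0, 1, 2}. (-1) ^ i * of_nat (2 choose i) *
     (if 2 dvd (2 * j - i) then of_nat (((2 * j - i) div 2 + 2 - 1) choose ((2 * j - i) div 2)) else 0))"
    by (rule sum.mono_neutral_right) (auto simp: Suc binomial_eq_0)
  also have "\<dots> = 2 * of_nat j + 1"
  proof -
    have "2 * j - 1 = 2 * j' + 1" "2 * j - 2 = 2 * j'" "j = j' + 1"
      using Suc by simp_all
    then show ?thesis
      by simp
  qed
  finally show ?thesis .
qed

section \<open>The coefficients of F_{n,k} for n \<le> 0\<close>

lemma Fpoly_nonpos:
  assumes "k \<ge> 2" and "n \<le> 0"
  shows "Fpoly k n = Fneg k (nat (1 - n))"
proof (cases "n \<ge> 2 - int k")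
  case True
  with assms have "Fup k (nat (n + int k - 2)) = 0" and "Fneg k (nat (1 - n)) = 0"
    by (subst Fup.simps Fneg.simps; simp)+
  with True show ?thesis
    by (simp add: Fpoly_def)
qed (simp add: Fpoly_def)

definition Fneg_coeff :: "nat \<Rightarrow> nat \<Rightarrow> nat \<Rightarrow> rat" where
  "Fneg_coeff k m e = (if e \<le> m \<and> k dvd (m - e) then Ck_nat k ((m - e) div k) e else 0)"

lemma Fneg_coeff_rec:
  assumes k: "k \<ge> 2" and m: "m \<ge> k"
  shows "Fneg_coeff k m e = Fneg_coeff k (m - k) e -
           (\<Sum>j\<in>{1..k-1}. if j \<le> e then Fneg_coeff k (m - j) (e - j) else 0)"
proof (cases "e \<le> m \<and> k dvd (m - e)")
  case False
  have "\<not> (e \<le> m - k \<and> k dvd (m - k - e))"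
  proof
    assume shifted: "e \<le> m - k \<and> k dvd (m - k - e)"
    then have "m - e = (m - k - e) + k"
      using m by linarith
    with shifted have "k dvd (m - e)"
      by simp
    with shifted False show False
      by simp
  qed
  with False m show ?thesis
    by (auto simp: Fneg_coeff_def intro!: sum.neutral)
next
  case True
  then obtain p where p: "m - e = k * p"
    by blast
  show ?thesis
  proof (cases p)
    case 0
    then have "e = m"
      using p True by simp
    then show ?thesis
      using m k by (auto simp: Fneg_coeff_def Ck_nat_0 intro!: sum.neutral)
  next
    case (Suc p')
    then have p_Suc: "m - e = k * Suc p'"
      using p by simp
    then have "m - k - e = k * p'" "e \<le> m - k"
      using True by (simp_all add: algebra_simps)
    then have "Fneg_coeff k (m - k) e = Ck_nat k p' e"
      using k by (simp add: Fneg_coeff_def)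
    also have "\<dots> = (\<Sum>i<k. if i \<le> e then Ck_nat k (Suc p') (e - i) else 0)"
      using k by (simp add: Ck_nat_rec)
    also have "\<dots> = Ck_nat k (Suc p') e +
        (\<Sum>j\<in>{1..k-1}. if j \<le> e then Ck_nat k (Suc p') (e - j) else 0)"
    proof -
      have "{..<k} = insert 0 {1..k-1}"
        using k by auto
      then show ?thesis
        by simp
    qed
    also have "(\<Sum>j\<in>{1..k-1}. if j \<le> e then Ck_nat k (Suc p') (e - j) else 0) =
        (\<Sum>j\<in>{1..k-1}. if j \<le> e then Fneg_coeff k (m - j) (e - j) else 0)"
      using True p_Suc m k by (intro sum.cong) (auto simp: Fneg_coeff_def)
    finally show ?thesis
      using True p_Suc k by (simp add: Fneg_coeff_def)
  qed
qed

lemma coeff_Fneg: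
  assumes k: "k \<ge> 2"
  shows "rat_of_int (coeff (Fneg k m) e) = Fneg_coeff k m e"
proof (induction m arbitrary: e rule: less_induct)
  case (less m)
  show ?case
  proof (cases "m < k")
    case True
    then show ?thesis
      using k by (subst Fneg.simps) (auto simp: Fneg_coeff_def Ck_nat_0 dvd_imp_le)
  next
    case False
    then have "Fneg k m = Fneg k (m - k) - (\<Sum>j\<in>{1..k-1}. monom 1 j * Fneg k (m - j))"
      using k by (subst Fneg.simps) auto
    then have "of_int (coeff (Fneg k m) e) = of_int (coeff (Fneg k (m - k)) e) -
        (\<Sum>j\<in>{1..k-1}. if j \<le> e then of_int (coeff (Fneg k (m - j)) (e - j)) else 0)"
      by (auto simp: coeff_sum coeff_monom_mult of_int_sum intro!: sum.cong)
    also have "\<dots> = Fneg_coeff k (m - k) e -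
        (\<Sum>j\<in>{1..k-1}. if j \<le> e then Fneg_coeff k (m - j) (e - j) else 0)"
      using False k by (intro arg_cong2[where f = minus] sum.cong refl) (simp_all add: less)
    also have "\<dots> = Fneg_coeff k m e"
      using False k by (simp add: Fneg_coeff_rec)
    finally show ?thesis .
  qed
qed

lemma coeff_Fneg_eq_0:
  assumes "k \<ge> 2" and "r < k" and "\<not> (r \<le> e \<and> k dvd (e - r))"
  shows "coeff (Fneg k (k * q + r)) e = 0"
proof -
  have "\<not> (e \<le> k * q + r \<and> k dvd (k * q + r - e))"
  proof
    assume "e \<le> k * q + r \<and> k dvd (k * q + r - e)"
    then have "e mod k = r"
      using \<open>r < k\<close> mod_eq_dvd_iff_nat[of e "k * q + r" k] by simp
    then have "r \<le> e \<and> k dvd (e - r)"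
      using mod_less_eq_dividend[of e k] dvd_minus_mod[of k e] by simp
    with assms(3) show False ..
  qed
  then have "rat_of_int (coeff (Fneg k (k * q + r)) e) = 0"
    using assms(1) by (auto simp: coeff_Fneg Fneg_coeff_def)
  then show ?thesis
    by simp
qed

section \<open>Polynomials in x^k\<close>

lemma coeff_monom_mult_pcompose_monom:
  fixes P :: "'a::comm_semiring_1 poly"
  assumes "k > 0"
  shows "coeff (monom 1 r * pcompose P (monom 1 k)) e =
    (if r \<le> e \<and> k dvd (e - r) then coeff P ((e - r) div k) else 0)"
proof -
  have "coeff (pcompose P (monom 1 k)) e = (if k dvd e then coeff P (e div k) else 0)" for e
  proof (induction P arbitrary: e rule: pCons_induct)
    case (pCons a P)
    show ?case
    proof (cases "e < k")
      case True
      then show ?thesis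
        using assms
        by (auto simp: pcompose_pCons coeff_monom_mult coeff_pCons dest: dvd_imp_le split: nat.split)
    next
      case False
      then have "k dvd e \<longleftrightarrow> k dvd (e - k)" "e div k = Suc ((e - k) div k)"
        using assms by (simp_all add: dvd_minus_self le_div_geq)
      with False assms show ?thesis
        by (simp add: pcompose_pCons coeff_monom_mult coeff_pCons pCons.IH split: nat.split)
    qed
  qed simp
  then show ?thesis
    by (simp add: coeff_monom_mult not_less)
qed

lemma ex1_monom_mult_pcompose_monom:
  fixes F :: "'a::comm_semiring_1 poly"
  assumes k: "k > 0" and F: "\<And>e. \<not> (r \<le> e \<and> k dvd (e - r)) \<Longrightarrow> coeff F e = 0"
  shows "\<exists>!P. F = monom 1 r * pcompose P (monom 1 k)"
proof -
  have coeff_F_above: "coeff F (r + k * i) = 0" if "degree F < i" for i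
  proof (rule coeff_eq_0)
    have "i \<le> k * i"
      using k by simp
    with that show "degree F < r + k * i"
      by linarith
  qed
  define P0 where "P0 = (\<Sum>i\<le>degree F. monom (coeff F (r + k * i)) i)"
  have coeff_P0: "coeff P0 i = coeff F (r + k * i)" for i
    by (auto simp: P0_def coeff_sum coeff_F_above)
  show ?thesis
  proof (rule ex1I[of _ P0])
    show "F = monom 1 r * pcompose P0 (monom 1 k)"
      using k F by (intro poly_eqI) (auto simp: coeff_monom_mult_pcompose_monom coeff_P0)
  next
    fix P assume "F = monom 1 r * pcompose P (monom 1 k)"
    then show "P = P0"
      using k by (intro poly_eqI) (simp add: coeff_P0 coeff_monom_mult_pcompose_monom)
  qed
qed

section \<open>Vieta's formulas\<close>

lemma coeff_prod_linear_factors: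
  fixes f :: "'b \<Rightarrow> 'a::comm_ring_1"
  assumes A: "finite A" and d: "d \<le> card A"
  shows "coeff (\<Prod>i\<in>A. [:- f i, 1:]) d =
    (-1) ^ (card A - d) * (\<Sum>S | S \<subseteq> A \<and> card S = card A - d. \<Prod>i\<in>S. f i)"
proof -
  have card_diff: "card (A - S) = card A - card S" if "S \<in> Pow A" for S
    using that A by (auto intro: card_Diff_subset finite_subset)
  have "(\<Prod>i\<in>A. [:- f i, 1:]) = (\<Prod>i\<in>A. [:- f i:] + monom 1 1)"
    by (simp add: monom_altdef)
  also have "\<dots> = (\<Sum>S\<in>Pow A. (\<Prod>i\<in>S. [:- f i:]) * (\<Prod>i\<in>A - S. monom 1 1))"
    by (rule prod_add[OF A])
  also have "\<dots> = (\<Sum>S\<in>Pow A. monom (\<Prod>i\<in>S. - f i) (card A - card S))"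
    by (intro sum.cong refl) (simp add: card_diff monom_power prod_to_poly smult_monom)
  finally have "coeff (\<Prod>i\<in>A. [:- f i, 1:]) d =
      (\<Sum>S\<in>Pow A. if card S = card A - d then \<Prod>i\<in>S. - f i else 0)"
    using d card_mono[OF A] by (auto simp: coeff_sum intro!: sum.cong)
  also have "\<dots> = (\<Sum>S | S \<subseteq> A \<and> card S = card A - d. \<Prod>i\<in>S. - f i)"
    using A by (simp add: sum.inter_filter[symmetric] Pow_def)
  also have "\<dots> = (-1) ^ (card A - d) * (\<Sum>S | S \<subseteq> A \<and> card S = card A - d. \<Prod>i\<in>S. f i)"
    by (simp add: sum_distrib_left prod_uminus)
  finally show ?thesis .
qed

lemma prod_list_map_conv_prod_nth: "prod_list (map g xs) = (\<Prod>i<length xs. g (xs ! i))"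
proof -
  have "(\<Prod>i<length xs. g (xs ! i)) = prod_list (map (\<lambda>i. g (xs ! i)) [0..<length xs])"
    using prod.distinct_set_conv_list[of "[0..<length xs]" "\<lambda>i. g (xs ! i)"]
    by (simp add: atLeast0LessThan)
  also have "map (\<lambda>i. g (xs ! i)) [0..<length xs] = map g xs"
    by (rule nth_equalityI) simp_all
  finally show ?thesis ..
qed

lemma coeff_prod_list_linear_factors:
  assumes "d \<le> length xs"
  shows "coeff (\<Prod>x\<leftarrow>xs. [:- x, 1:]) d = (-1) ^ (length xs - d) * esym (length xs - d) xs"
  using coeff_prod_linear_factors[of "{..<length xs}" d "(!) xs"] assms
  by (simp add: prod_list_map_conv_prod_nth esym_def)

lemma esym_1: "esym 1 xs = sum_list xs"
proof -
  have "{S. S \<subseteq> {..<length xs} \<and> card S = 1} = (\<lambda>i. {i}) ` {..<length xs}"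
    by (auto simp: card_1_singleton_iff)
  then show ?thesis
    by (simp add: esym_def sum.reindex sum_list_sum_nth atLeast0LessThan)
qed

lemma esym_length: "esym (length xs) xs = prod_list xs"
proof -
  have "S = {..<length xs}" if "S \<subseteq> {..<length xs}" "card S = length xs" for S
    using card_subset_eq[OF _ that(1)] that(2) by simp
  then have "{S. S \<subseteq> {..<length xs} \<and> card S = length xs} = {{..<length xs}}"
    by auto
  then show ?thesis
    using prod_list_map_conv_prod_nth[of id xs] by (simp add: esym_def)
qed

lemma esym_eq_coeff_div_lead_coeff:
  fixes p :: "complex poly"
  assumes p: "p = smult (lead_coeff p) (\<Prod>x\<leftarrow>xs. [:- x, 1:])" and "p \<noteq> 0"
    and len: "length xs = degree p" and h: "h \<le> degree p"
  shows "esym h xs = (-1) ^ h * coeff p (degree p - h) / lead_coeff p"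
proof -
  have "coeff p (degree p - h) = lead_coeff p * ((-1) ^ h * esym h xs)"
    by (subst p) (simp add: coeff_prod_list_linear_factors len h)
  with \<open>p \<noteq> 0\<close> show ?thesis
    by (simp add: field_simps)
qed

section \<open>The polynomial P_{n,k}\<close>

lemma times_binomial_pred_eq:
  assumes "1 \<le> r" "r \<le> q"
  shows "r * ((q - 1) choose r) = (q - r) * ((q - 1) choose (r - 1))"
proof -
  obtain r' where r': "r = Suc r'"
    using assms(1) by (cases r) auto
  have "Suc r' * ((q - 1) choose Suc r') = (q - 1) * ((q - 1 - 1) choose r')"
    by (rule binomial_absorption)
  moreover have "(q - 1 - r') * ((q - 1) choose r') = (q - 1) * ((q - 1 - 1) choose r')"
    by (rule binomial_absorb_comp)
  ultimately show ?thesis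
    using r' by simp
qed

lemma of_int_eq_of_rat: "rat_of_int a = b \<Longrightarrow> of_int a = (of_rat b :: 'a::field_char_0)"
  by (metis of_rat_of_int_eq)

(* With |n| + 1 = k q + r, Fneg k (k * q + r) is F_{n,k} and P is P_{n,k}. *)
locale Fneg_factorization =
  fixes k q r :: nat and P :: "int poly"
  assumes k: "k \<ge> 2" and r_less_k: "r < k" and index_pos: "0 < k * q + r"
    and factorization: "Fneg k (k * q + r) = monom 1 r * pcompose P (monom 1 k)"
    and P_nonzero: "P \<noteq> 0"
begin

lemma coeff_P: "rat_of_int (coeff P i) = (if i \<le> q then Ck_nat k (q - i) (r + k * i) else 0)"
proof -
  have "coeff P i = coeff (Fneg k (k * q + r)) (r + k * i)"
    using k by (simp add: factorization coeff_monom_mult_pcompose_monom)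
  moreover have "k * q + r - (r + k * i) = k * (q - i)"
    by (simp add: diff_mult_distrib2)
  moreover have "r + k * i \<le> k * q + r \<longleftrightarrow> i \<le> q"
    using k by simp
  ultimately show ?thesis
    using k by (simp add: coeff_Fneg Fneg_coeff_def)
qed

lemma coeff_P_closed_form:
  assumes "i \<le> q" and "q < r + k + i \<or> i = 0"
  shows "rat_of_int (coeff P i) = (-1) ^ r * of_nat ((q - i) choose r) * of_nat ((q - 1) choose i)"
proof -
  have "Ck_nat k (q - i) (k * i + r) =
      (if r \<le> q - i
       then (-1) ^ r * of_nat ((q - i) choose r) * of_nat ((i + (q - i) - 1) choose i) else 0)"
    using assms k r_less_k by (intro Ck_nat_closed_form) auto
  moreover have "i + (q - i) - 1 = q - 1"
    using assms(1) by simp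
  ultimately show ?thesis
    using assms(1) by (simp add: coeff_P add.commute binomial_eq_0)
qed

lemma max_1_r_le_q: "max 1 r \<le> q"
proof (rule ccontr)
  assume "\<not> max 1 r \<le> q"
  then have "q < r"
    using index_pos by auto
  have "coeff P i = 0" for i
  proof (cases "i \<le> q")
    case True
    with \<open>q < r\<close> have "rat_of_int (coeff P i) = 0"
      by (subst coeff_P_closed_form) (auto simp: binomial_eq_0)
    then show ?thesis
      by simp
  qed (use coeff_P[of i] in simp)
  then have "P = 0"
    by (intro poly_eqI) simp
  with P_nonzero show False ..
qed

lemma coeff_P_eq_0_above: "q - max 1 r < i \<Longrightarrow> coeff P i = 0"
proof (cases "i \<le> q")
  case True
  assume "q - max 1 r < i"
  with True k max_1_r_le_q have "rat_of_int (coeff P i) = 0"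
    by (subst coeff_P_closed_form) (auto simp: binomial_eq_0)
  then show ?thesis
    by simp
qed (use coeff_P[of i] in simp)

lemma coeff_P_degree: "rat_of_int (coeff P (q - max 1 r)) = (-1) ^ r * of_nat ((q - 1) choose (r - 1))"
proof -
  have "rat_of_int (coeff P (q - max 1 r)) =
      (-1) ^ r * of_nat (max 1 r choose r) * of_nat ((q - 1) choose (q - max 1 r))"
    using max_1_r_le_q k by (subst coeff_P_closed_form) auto
  moreover have "(q - 1) choose (q - max 1 r) = (q - 1) choose (r - 1)"
    using max_1_r_le_q binomial_symmetric[of "r - 1" "q - 1"] by (cases "r = 0") auto
  ultimately show ?thesis
    by (cases "r = 0") auto
qed

(* q - max 1 r is N: q - 1 if r = 0 and q - r otherwise. *)
lemma degree_P: "degree P = q - max 1 r"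
proof (rule antisym)
  show "degree P \<le> q - max 1 r"
    by (rule degree_le) (auto intro: coeff_P_eq_0_above)
  have "coeff P (q - max 1 r) \<noteq> 0"
    using coeff_P_degree max_1_r_le_q by auto
  then show "q - max 1 r \<le> degree P"
    by (rule le_degree)
qed

lemma int_degree_P: "int (degree P) = (if r = 0 then int q - 1 else int q - int r)"
  using max_1_r_le_q by (auto simp: degree_P)

(* For r = 0 the truncated r - 1 is 0, so the binomial coefficient is 1. *)
lemma lead_coeff_P: "rat_of_int (lead_coeff P) = (-1) ^ r * of_nat ((q - 1) choose (r - 1))"
  using coeff_P_degree by (simp add: degree_P)

lemma coeff_P_degree_minus:
  assumes "h \<le> degree P"
  shows "rat_of_int (coeff P (degree P - h)) =
    Ck_nat k (h + max 1 r) (k * q + r - k * (h + max 1 r))"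
proof -
  have le: "h + max 1 r \<le> q"
    using assms max_1_r_le_q unfolding degree_P by arith
  then have index: "degree P - h = q - (h + max 1 r)"
    unfolding degree_P by arith
  from le have "k * (h + max 1 r) \<le> k * q"
    by simp
  with le index have "q - (degree P - h) = h + max 1 r"
    and "r + k * (degree P - h) = k * q + r - k * (h + max 1 r)"
    by (simp_all add: diff_mult_distrib2)
  then show ?thesis
    by (simp add: coeff_P)
qed

lemma coeff_P_subleading:
  assumes "1 \<le> degree P"
  shows "rat_of_int (coeff P (degree P - 1)) =
    (if r = 0 \<and> k = 2 then 2 * of_nat q - 3
     else if r = 0 then of_nat q - 1
     else (-1) ^ r * of_nat (r + 1) * of_nat ((q - 1) choose r))"
proof -
  have q: "max 1 r + 1 \<le> q"
    using assms max_1_r_le_q by (simp add: degree_P)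
  show ?thesis
  proof (cases "r = 0")
    case True
    then have i: "degree P - 1 = q - 2"
      by (simp add: degree_P)
    show ?thesis
    proof (cases "k = 2")
      case True
      with \<open>r = 0\<close> q have "rat_of_int (coeff P (q - 2)) = Ck_nat 2 2 (2 * (q - 2))"
        by (simp add: coeff_P)
      then have "rat_of_int (coeff P (degree P - 1)) = Ck_nat 2 2 (2 * (q - 2))"
        by (simp only: i)
      with \<open>r = 0\<close> True q show ?thesis
        by (simp add: Ck_nat_2_2 of_nat_diff)
    next
      case False
      have "rat_of_int (coeff P (q - 2)) =
          (-1) ^ r * of_nat ((q - (q - 2)) choose r) * of_nat ((q - 1) choose (q - 2))"
        using k q False by (intro coeff_P_closed_form) auto
      then have "rat_of_int (coeff P (q - 2)) = of_nat ((q - 1) choose (q - 2))"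
        using \<open>r = 0\<close> by simp
      then have "rat_of_int (coeff P (degree P - 1)) = of_nat ((q - 1) choose (q - 2))"
        by (simp only: i)
      also have "(q - 1) choose (q - 2) = q - 1"
        using q binomial_Suc_n[of "q - 2"] by (simp add: \<open>r = 0\<close> Suc_diff_Suc numeral_2_eq_2)
      finally show ?thesis
        using False \<open>r = 0\<close> q by (simp add: of_nat_diff)
    qed
  next
    case False
    have "rat_of_int (coeff P (q - r - 1)) =
        (-1) ^ r * of_nat ((q - (q - r - 1)) choose r) * of_nat ((q - 1) choose (q - r - 1))"
      using k q False by (intro coeff_P_closed_form) auto
    moreover have "q - (q - r - 1) = Suc r" "degree P - 1 = q - r - 1"
      using q False by (simp_all add: degree_P)
    moreover have "(q - 1) choose (q - r - 1) = (q - 1) choose r"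
      using q False binomial_symmetric[of r "q - 1"] by (simp add: diff_commute)
    ultimately show ?thesis
      using False by simp
  qed
qed

lemma coeff_P_0: "rat_of_int (coeff P 0) = (-1) ^ r * of_nat (q choose r)"
  by (simp add: coeff_P_closed_form)

context
  fixes xs :: "complex list"
  assumes roots: "map_poly of_int P = smult (of_int (lead_coeff P)) (\<Prod>x\<leftarrow>xs. [:- x, 1:])"
    and length_roots: "length xs = degree P"
begin

lemma esym_roots_eq_coeff:
  assumes "h \<le> degree P"
  shows "esym h xs = (-1) ^ h * of_int (coeff P (degree P - h)) / of_int (lead_coeff P)"
proof -
  define p where "p = (map_poly of_int P :: complex poly)"
  have degree: "degree p = degree P"
    by (simp add: p_def degree_map_poly)
  have lead: "lead_coeff p = of_int (lead_coeff P)"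
    by (simp add: degree) (simp add: p_def coeff_map_poly)
  have "p = smult (lead_coeff p) (\<Prod>x\<leftarrow>xs. [:- x, 1:])"
    unfolding lead unfolding p_def by (rule roots)
  then have "esym h xs = (-1) ^ h * coeff p (degree p - h) / lead_coeff p"
    by (rule esym_eq_coeff_div_lead_coeff)
      (use assms lead P_nonzero length_roots in \<open>auto simp: degree\<close>)
  then show ?thesis
    by (simp only: degree lead) (simp add: p_def coeff_map_poly)
qed

lemma esym_roots:
  assumes "h \<le> degree P"
  shows "esym h xs =
    (if r = 0 then (-1) ^ h * of_rat (Ck k (- (int h + 1)) (int (k * q + r) - int k * (int h + 1)))
     else (-1) ^ (h + r) * of_rat (Ck k (- (int h + int r)) (int (k * q + r) - int k * (int h + int r)))
       / of_nat ((q - 1) choose (r - 1)))"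
proof -
  have "h + max 1 r \<le> q"
    using assms max_1_r_le_q unfolding degree_P by arith
  then have le: "k * (h + max 1 r) \<le> k * q + r"
    by (simp add: trans_le_add1)
  have "esym h xs = (-1) ^ (h + r) * of_rat (Ck_nat k (h + max 1 r) (k * q + r - k * (h + max 1 r))) /
      of_nat ((q - 1) choose (r - 1))"
    using assms by (simp add: esym_roots_eq_coeff of_int_eq_of_rat[OF coeff_P_degree_minus]
        of_int_eq_of_rat[OF lead_coeff_P] of_rat_mult of_rat_power power_add divide_simps)
  also have "Ck_nat k (h + max 1 r) (k * q + r - k * (h + max 1 r)) =
      Ck k (- int (h + max 1 r)) (int (k * q + r) - int k * int (h + max 1 r))"
    using Ck_eq_Ck_nat_diff[OF le] ..
  finally show ?thesis
    by (cases "r = 0") (simp_all add: algebra_simps)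
qed

lemma sum_roots:
  assumes "1 \<le> degree P"
  shows "sum_list xs =
    (if r = 0 \<and> k = 2 then - (2 * of_nat q - 3)
     else if r = 0 then - (of_nat q - 1)
     else - (of_nat (r + 1) * of_int (int q - int r) / of_nat r))"
proof -
  have q: "r + 1 \<le> q" "1 \<le> q"
    using assms max_1_r_le_q by (auto simp: degree_P)
  have binomial: "(of_nat ((q - 1) choose r) :: complex) =
      (of_nat q - of_nat r) * of_nat ((q - 1) choose (r - 1)) / of_nat r"
    if "r \<noteq> 0"
  proof -
    have "(of_nat (r * ((q - 1) choose r)) :: complex) = of_nat ((q - r) * ((q - 1) choose (r - 1)))"
      using times_binomial_pred_eq[of r q] that q by simp
    with that q show ?thesis
      by (simp add: field_simps of_nat_diff)
  qed
  have "sum_list xs = - of_int (coeff P (degree P - 1)) / of_int (lead_coeff P)"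
    using esym_roots_eq_coeff[OF assms] esym_1[of xs] by simp
  also have "\<dots> = - of_rat (if r = 0 \<and> k = 2 then 2 * of_nat q - 3
      else if r = 0 then of_nat q - 1 else (-1) ^ r * of_nat (r + 1) * of_nat ((q - 1) choose r)) /
      of_rat ((-1) ^ r * of_nat ((q - 1) choose (r - 1)))"
    unfolding of_int_eq_of_rat[OF coeff_P_subleading[OF assms]] of_int_eq_of_rat[OF lead_coeff_P] ..
  also have "\<dots> = (if r = 0 \<and> k = 2 then - (2 * of_nat q - 3)
     else if r = 0 then - (of_nat q - 1)
     else - (of_nat (r + 1) * of_nat ((q - 1) choose r) / of_nat ((q - 1) choose (r - 1))))"
    by (simp add: of_rat_mult of_rat_diff of_rat_add of_rat_power)
  finally show ?thesis
    using q binomial by (auto simp: of_nat_diff)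
qed

lemma prod_roots:
  "prod_list xs = (if r = 0 then (-1) ^ degree P else (-1) ^ degree P * of_nat q / of_nat r)"
proof -
  have binomial: "(of_nat (q choose r) :: complex) =
      of_nat q * of_nat ((q - 1) choose (r - 1)) / of_nat r"
    if "r \<noteq> 0"
  proof -
    have "(of_nat (r * (q choose r)) :: complex) = of_nat (q * ((q - 1) choose (r - 1)))"
      using times_binomial_minus1_eq[of r q] that by simp
    with that show ?thesis
      by (simp add: field_simps)
  qed
  have "prod_list xs = (-1) ^ degree P * of_int (coeff P 0) / of_int (lead_coeff P)"
    using esym_roots_eq_coeff[of "degree P"] esym_length[of xs] length_roots by simp
  also have "\<dots> = (-1) ^ degree P * of_rat ((-1) ^ r * of_nat (q choose r)) /
      of_rat ((-1) ^ r * of_nat ((q - 1) choose (r - 1)))"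
    unfolding of_int_eq_of_rat[OF coeff_P_0] of_int_eq_of_rat[OF lead_coeff_P] ..
  also have "\<dots> = (-1) ^ degree P * of_nat (q choose r) / of_nat ((q - 1) choose (r - 1))"
    by (simp add: of_rat_mult of_rat_power)
  finally show ?thesis
    using max_1_r_le_q binomial by auto
qed

end

end

theorem mainTheorem18:
  fixes k :: nat and n :: int
  assumes "k \<ge> 2" and "n \<le> 0" and "Fpoly k n \<noteq> 0"
  shows "(\<exists>!P :: int poly. Fpoly k n = monom 1 (rnk n k) * pcompose P (monom 1 k))
    \<and> (\<forall>P :: int poly. Fpoly k n = monom 1 (rnk n k) * pcompose P (monom 1 k) \<longrightarrow>
      (let q = qnk n k; r = rnk n k;
           N = (if r = 0 then int q - 1 else int q - int r) in
        int (degree P) = N \<and>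
        (\<forall>xs :: complex list. length xs = nat N \<and>
            map_poly of_int P = smult (of_int (lead_coeff P)) (\<Prod>x\<leftarrow>xs. [:- x, 1:]) \<longrightarrow>
          (\<forall>h :: nat. 1 \<le> h \<and> int h \<le> N \<longrightarrow>
             esym h xs =
               (if r = 0 then (-1) ^ h * of_rat (Ck k (- (int h + 1)) (\<bar>n\<bar> + 1 - int k * (int h + 1)))
                else (-1) ^ (h + r) * of_rat (Ck k (- (int h + int r)) (\<bar>n\<bar> + 1 - int k * (int h + int r)))
                     / of_nat ((q - 1) choose (r - 1))))
          \<and> (N \<ge> 1 \<longrightarrow>
               sum_list xs =
                 (if r = 0 \<and> k = 2 then - (2 * of_nat q - 3)
                  else if r = 0 then - (of_nat q - 1)
                  else - (of_nat (r + 1) * of_int (int q - int r) / of_nat r))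
             \<and> prod_list xs =
                 (if r = 0 then (-1) ^ nat N
                  else (-1) ^ nat N * of_nat q / of_nat r)))))"
proof -
  define q r where "q = qnk n k" and "r = rnk n k"
  have abs_n: "\<bar>n\<bar> + 1 = int (k * q + r)"
    using assms(2) by (simp add: q_def r_def qnk_def rnk_def)
  have index_pos: "0 < k * q + r"
    using abs_n abs_ge_zero[of n] by linarith
  have r: "r < k"
    using assms(1) by (simp add: r_def rnk_def)
  have "nat (1 - n) = k * q + r"
    using abs_n assms(2) by (simp del: of_nat_add of_nat_mult add: nat_int)
  then have F: "Fpoly k n = Fneg k (k * q + r)"
    using assms(1,2) by (simp add: Fpoly_nonpos)
  have ex1: "\<exists>!P. Fpoly k n = monom 1 r * pcompose P (monom 1 k)"
    unfolding F using assms(1) r by (intro ex1_monom_mult_pcompose_monom) (auto intro: coeff_Fneg_eq_0)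
  have factorization_locale: "Fneg_factorization k q r P"
    if "Fpoly k n = monom 1 r * pcompose P (monom 1 k)" for P
    using that assms F index_pos r by unfold_locales auto
  show ?thesis
    unfolding Let_def q_def[symmetric] r_def[symmetric]
  proof (intro conjI[OF ex1] allI impI, goal_cases)
    case (1 P)
    then interpret Fneg_factorization k q r P
      by (rule factorization_locale)
    show ?case
      unfolding int_degree_P[symmetric] by (auto simp: abs_n esym_roots sum_roots prod_roots)
  qed
qed

end
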